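(* Let $N>1$, $d\ge1$, and let $f:\mathbb{R}^{N\times d}\times\mathbb{R}^{N\times 3}\to Y$ (any set $Y$) satisfy $f(s,\vec r o^T)=f(s,\vec r)$ for all $o\in\mathrm{O}(3)$ and $f(s,\vec r+\mathbf{1}t)=f(s,\vec r)$ for all $t\in\mathbb{R}^{1\times 3}$, where $\mathbf 1\in\mathbb{R}^{N\times1}$ is the all-ones column. Let $g$ be any function with the properties stated in the context, and for each molecule $(s,\vec r)$ let $\vec E_1=g(\mathrm{LE}_1)$. Then there exist functions $\varphi$, $\rho$ and $h$ such that for all $(s,\vec r)$, $$f(s,\vec r)=h(z_1),\qquad z_1=\rho\Big(\sum_{j=1}^N\varphi\big(\mathrm{Concatenate}(\vec r_{1j}\vec E_1^T,\ \tilde s_j)\big)\Big).$$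
   Context: For a molecule with features $s\in\mathbb{R}^{N\times d}$ (row $s_j$) and coordinates $\vec r\in\mathbb{R}^{N\times 3}$ (row $\vec r_j$), set $\vec r_{ij}=\vec r_i-\vec r_j$, node identity features $\tilde s_j=\mathrm{Concatenate}(s_j,j)\in\mathbb{R}^{d+1}$ and local environments $\mathrm{LE}_i=\{(\tilde s_j,\vec r_{ij}): j=1,\dots,N\}$. $\mathrm{O}(3)=\{Q\in\mathbb{R}^{3\times3}:QQ^T=I\}$. The function $g$ maps such local environments to $\mathbb{R}^{3\times3}$, satisfies $g(\{(\tilde s_j,\vec r_{ij}o^T)\}_j)=g(\{(\tilde s_j,\vec r_{ij})\}_j)o^T$ for all $o\in\mathrm{O}(3)$, and for every molecule and $i$ the matrix $\vec E_i=g(\mathrm{LE}_i)$, with $k=\mathrm{rank}(\vec E_i)$, has its first $k$ rows forming an orthonormal basis of $\mathrm{span}\{\vec r_{ij}:j=1,\dots,N\}$ and its remaining rows zero. *)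

theory Defs
  imports "HOL-Analysis.Analysis"
begin

text \<open>A molecule with N nodes: features s :: real^'d^'n (row s$j), coordinates
  r :: real^3^'n (row r$j). The nodes are labelled 1..N by a bijection idx.\<close>

definition rel_pos :: "real^3^'n \<Rightarrow> 'n \<Rightarrow> 'n \<Rightarrow> real^3" where
  "rel_pos r i j = r$i - r$j"

definition node_feat :: "('n \<Rightarrow> nat) \<Rightarrow> real^'d^'n \<Rightarrow> 'n \<Rightarrow> (real^'d) \<times> real" where
  "node_feat idx s j = (s$j, real (idx j))"

definition local_env ::
  "('n \<Rightarrow> nat) \<Rightarrow> real^'d^'n \<Rightarrow> real^3^'n \<Rightarrow> 'n \<Rightarrow> (((real^'d) \<times> real) \<times> (real^3)) set" where
  "local_env idx s r i = {(node_feat idx s j, rel_pos r i j) | j. True}"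

text \<open>Properties of the frame function g. Rows of a 3x3 matrix E are E $ of_nat a, a = 1,2,3.
  A row vector times o^T corresponds to o *v (column vector); E o^T is E ** transpose o.\<close>
definition frame_fn ::
  "('n::finite \<Rightarrow> nat) \<Rightarrow> ((((real^'d) \<times> real) \<times> (real^3)) set \<Rightarrow> real^3^3) \<Rightarrow> bool" where
  "frame_fn idx g \<longleftrightarrow>
     (\<forall>(s::real^'d^'n) (r::real^3^'n) i (Q::real^3^3). orthogonal_matrix Q \<longrightarrow>
        g {(node_feat idx s j, Q *v rel_pos r i j) | j. True} = g (local_env idx s r i) ** transpose Q)
   \<and> (\<forall>(s::real^'d^'n) (r::real^3^'n) i.
        let E = g (local_env idx s r i); k = rank E in
          (\<forall>a\<in>{1..k}. \<forall>b\<in>{1..k}. (E $ of_nat a) \<bullet> (E $ of_nat b) = (if a = b then 1 else 0))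
        \<and> span {E $ of_nat a | a. a \<in> {1..k}} = span (range (rel_pos r i))
        \<and> (\<forall>a\<in>{k+1..3}. E $ of_nat a = 0))"

end

theory Submission
  imports Defs
begin

text \<open>The frame \<open>E\<^sub>1\<close> has orthonormal nonzero rows spanning the relative positions, so
  completing them to an orthonormal basis gives \<open>Q \<in> O(3)\<close> that agrees with \<open>E\<^sub>1\<close> on every
  \<open>r\<^sub>j - r\<^sub>1\<close>. Translating node 1 to the origin and rotating by \<open>Q\<close> shows that \<open>f(s, r)\<close>
  depends only on the frame coordinates \<open>r\<^sub>1\<^sub>j E\<^sub>1\<^sup>T\<close> and the features. The node identity
  feature \<open>j\<close> lets \<open>\<phi>\<close> put its argument into the \<open>j\<close>-th slot of an \<open>N\<close>-tuple, so the sum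
  recovers the whole table of frame coordinates and features; take \<open>\<rho> = id\<close> and let \<open>h\<close> apply
  \<open>f\<close> to that table.\<close>

lemma dim_span_rows_unit_or_zero:
  fixes E :: "real^'n^'m"
  assumes unit: "\<And>i. E $ i \<noteq> 0 \<Longrightarrow> norm (E $ i) = 1"
    and orth: "\<And>i j. i \<noteq> j \<Longrightarrow> orthogonal (E $ i) (E $ j)"
  shows "dim (span (range (($) E))) = card {i. E $ i \<noteq> 0}"
proof -
  define B where "B = {i. E $ i \<noteq> 0}"
  have inj: "inj_on (($) E) B"
    using orth unit by (force simp: inj_on_def B_def orthogonal_def)
  have indep: "independent ((($) E) ` B)"
    by (rule pairwise_orthogonal_independent) (auto simp: pairwise_def B_def intro!: orth)
  have "insert 0 (range (($) E)) = insert 0 ((($) E) ` B)"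
    by (auto simp: B_def)
  then have "span (range (($) E)) = span ((($) E) ` B)"
    by (metis span_insert_0)
  then show ?thesis
    using indep inj by (simp add: B_def dim_span dim_eq_card_independent card_image)
qed

lemma orthonormal_family_orthogonal_to_subspace:
  fixes V :: "'a::euclidean_space set"
  assumes "subspace V" and "finite I" and "card I + dim V = DIM('a)"
  obtains c where "\<And>i. i \<in> I \<Longrightarrow> norm (c i) = 1"
    and "\<And>i j. i \<in> I \<Longrightarrow> j \<in> I \<Longrightarrow> i \<noteq> j \<Longrightarrow> orthogonal (c i) (c j)"
    and "\<And>i v. i \<in> I \<Longrightarrow> v \<in> V \<Longrightarrow> orthogonal (c i) v"
proof -
  define T where "T = {y \<in> UNIV. \<forall>x\<in>V. orthogonal x y}"
  have "dim T + dim V = DIM('a)"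
    unfolding T_def using \<open>subspace V\<close> by (subst dim_subspace_orthogonal_to_vectors) auto
  then have dimT: "dim T = card I"
    using assms(3) by simp
  have "subspace T"
    unfolding T_def by (auto simp: subspace_def orthogonal_clauses)
  then obtain C where "C \<subseteq> T" and orthC: "pairwise orthogonal C"
      and unitC: "\<And>x. x \<in> C \<Longrightarrow> norm x = 1" and "card C = dim T" "independent C"
    by (metis orthonormal_basis_subspace)
  then obtain c where c: "bij_betw c I C"
    using dimT \<open>finite I\<close> by (metis bij_betw_iff_card independent_imp_finite)
  show thesis
  proof
    show "norm (c i) = 1" if "i \<in> I" for i
      using c unitC that by (auto simp: bij_betw_def)
    show "orthogonal (c i) (c j)" if "i \<in> I" "j \<in> I" "i \<noteq> j" for i j
      using c orthC that unfolding bij_betw_def inj_on_def pairwise_def by blast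
    show "orthogonal (c i) v" if "i \<in> I" "v \<in> V" for i v
      using c \<open>C \<subseteq> T\<close> that by (auto simp: bij_betw_def T_def orthogonal_commute)
  qed
qed

lemma orthogonal_matrix_extending_rows:
  fixes E :: "real^'n^'n"
  assumes unit: "\<And>i. E $ i \<noteq> 0 \<Longrightarrow> norm (E $ i) = 1"
    and orth: "\<And>i j. i \<noteq> j \<Longrightarrow> orthogonal (E $ i) (E $ j)"
  obtains Q where "orthogonal_matrix Q" "\<And>v. v \<in> span (range (($) E)) \<Longrightarrow> Q *v v = E *v v"
proof -
  define B where "B = {i. E $ i \<noteq> 0}"
  define V where "V = span (range (($) E))"
  have "card B \<le> CARD('n)"
    by (rule card_mono) auto
  then have "card (- B) + dim V = DIM(real^'n)"
    using dim_span_rows_unit_or_zero[OF unit orth]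
    by (simp add: V_def B_def Compl_eq_Diff_UNIV card_Diff_subset)
  then obtain c where unitc: "\<And>i. i \<in> - B \<Longrightarrow> norm (c i) = 1"
    and orthc: "\<And>i j. i \<in> - B \<Longrightarrow> j \<in> - B \<Longrightarrow> i \<noteq> j \<Longrightarrow> orthogonal (c i) (c j)"
    and c_perp: "\<And>i v. i \<in> - B \<Longrightarrow> v \<in> V \<Longrightarrow> orthogonal (c i) v"
    using orthonormal_family_orthogonal_to_subspace[OF _ finite] unfolding V_def by blast
  define Q where "Q = (\<chi> i. if i \<in> B then E $ i else c i)"
  show thesis
  proof
    show "orthogonal_matrix Q"
      unfolding orthogonal_matrix_orthonormal_rows
    proof (intro conjI allI impI)
      show "norm (row i Q) = 1" for i
        using unit unitc by (auto simp: Q_def row_def B_def)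
    next
      fix i j :: 'n assume "i \<noteq> j"
      moreover have "orthogonal (c j) (E $ k)" if "j \<in> - B" for j k
        using c_perp[OF that, of "E $ k"] by (simp add: V_def span_base)
      ultimately show "orthogonal (row i Q) (row j Q)"
        using orth orthc by (auto simp: Q_def row_def orthogonal_commute)
    qed
  next
    fix v assume v: "v \<in> span (range (($) E))"
    have "Q $ i \<bullet> v = E $ i \<bullet> v" for i
      using c_perp[of i v] v by (cases "i \<in> B") (simp_all add: Q_def B_def V_def orthogonal_def)
    then show "Q *v v = E *v v"
      by (simp add: vec_eq_iff matrix_vector_mul_component)
  qed
qed

lemma frame_rows_orthonormal_or_zero:
  fixes E :: "real^3^3"
  assumes k: "k \<le> 3"
    and orthonormal: "\<forall>a\<in>{1..k}. \<forall>b\<in>{1..k}. E $ of_nat a \<bullet> E $ of_nat b = (if a = b then 1 else 0)"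
    and zero: "\<forall>a\<in>{k+1..3}. E $ of_nat a = 0"
  shows "\<And>i. E $ i \<noteq> 0 \<Longrightarrow> norm (E $ i) = 1"
    and "\<And>i j. i \<noteq> j \<Longrightarrow> orthogonal (E $ i) (E $ j)"
proof -
  have index: "\<exists>a\<in>{1..3}. i = of_nat a" for i :: 3
  proof -
    have "i = of_nat 1 \<or> i = of_nat 2 \<or> i = of_nat 3"
      using exhaust_3[of i] by simp
    moreover have "{1, 2, 3} \<subseteq> {1..3::nat}" by auto
    ultimately show ?thesis by blast
  qed
  have unit_or_zero: "E $ of_nat a = 0 \<or> E $ of_nat a \<bullet> E $ of_nat a = 1" if a: "a \<in> {1..3}" for a
  proof (cases "a \<le> k")
    case True
    then show ?thesis using orthonormal[rule_format, of a a] a by simp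
  next
    case False
    then show ?thesis using zero[rule_format, of a] a by simp
  qed
  show "norm (E $ i) = 1" if "E $ i \<noteq> 0" for i
    using unit_or_zero index that by (metis norm_eq_1)
  show "orthogonal (E $ i) (E $ j)" if "i \<noteq> j" for i j
  proof -
    obtain a b where a: "a \<in> {1..3}" "i = of_nat a" and b: "b \<in> {1..3}" "j = of_nat b"
      using index by blast
    show ?thesis
    proof (cases "a \<le> k \<and> b \<le> k")
      case True
      have "a \<noteq> b" using a b that by blast
      then show ?thesis
        using orthonormal[rule_format, of a b] True a b by (simp add: orthogonal_def)
    next
      case False
      then have "E $ i = 0 \<or> E $ j = 0"
        using zero[rule_format, of a] zero[rule_format, of b] a b by auto
      then show ?thesis by (auto simp: orthogonal_clauses)
    qed
  qed
qed

lemma frame_extends_to_orthogonal_matrix: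
  assumes "frame_fn idx g"
  obtains Q :: "real^3^3" where "orthogonal_matrix Q"
    and "\<And>v. v \<in> span (range (\<lambda>j. r $ i - r $ j)) \<Longrightarrow> Q *v v = g (local_env idx s r i) *v v"
proof -
  define E where "E = g (local_env idx s r i)"
  define k where "k = rank E"
  have "rel_pos r i = (\<lambda>j. r $ i - r $ j)"
    by (simp add: fun_eq_iff rel_pos_def)
  then have frame: "(\<forall>a\<in>{1..k}. \<forall>b\<in>{1..k}. E $ of_nat a \<bullet> E $ of_nat b = (if a = b then 1 else 0))
      \<and> span {E $ of_nat a | a. a \<in> {1..k}} = span (range (\<lambda>j. r $ i - r $ j))
      \<and> (\<forall>a\<in>{k+1..3}. E $ of_nat a = 0)"
    using assms unfolding frame_fn_def E_def k_def by (simp add: Let_def)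
  have "k \<le> 3"
    using rank_bound[of E] by (simp add: k_def)
  note rows = frame_rows_orthonormal_or_zero[OF this frame[THEN conjunct1] frame[THEN conjunct2, THEN conjunct2]]
  obtain Q where Q: "orthogonal_matrix Q" and QE: "\<And>v. v \<in> span (range (($) E)) \<Longrightarrow> Q *v v = E *v v"
    using orthogonal_matrix_extending_rows[OF rows] by blast
  have "span (range (\<lambda>j. r $ i - r $ j)) \<subseteq> span (range (($) E))"
    unfolding frame[THEN conjunct2, THEN conjunct1, symmetric] by (rule span_mono) blast
  with QE show thesis
    using that[OF Q] unfolding E_def by blast
qed

lemma invariant_eq_frame_coordinates:
  fixes f :: "'s \<Rightarrow> real^'m^'n \<Rightarrow> 'y"
  assumes f_orth: "\<forall>(Q::real^'m^'m) s r. orthogonal_matrix Q \<longrightarrow> f s (\<chi> j. Q *v (r $ j)) = f s r"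
    and f_trans: "\<forall>s r (t::real^'m). f s (\<chi> j. r $ j + t) = f s r"
    and Q: "orthogonal_matrix Q"
    and QE: "\<And>v. v \<in> span (range (\<lambda>j. r $ i - r $ j)) \<Longrightarrow> Q *v v = E *v v"
  shows "f s r = f s (\<chi> j. - (E *v (r $ i - r $ j)))"
proof -
  have QE_neg: "Q *v (r $ j - r $ i) = - (E *v (r $ i - r $ j))" for j
  proof -
    have "Q *v (r $ j - r $ i) = - (Q *v (r $ i - r $ j))"
      by (metis minus_diff_eq matrix_vector_mul_linear linear_neg)
    then show ?thesis
      using QE[of "r $ i - r $ j"] by (simp add: span_base)
  qed
  have "f s r = f s (\<chi> j. r $ j + - r $ i)"
    by (rule f_trans[rule_format, symmetric])
  also have "\<dots> = f s (\<chi> j. Q *v ((\<chi> j. r $ j + - r $ i) $ j))"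
    by (rule f_orth[rule_format, OF Q, symmetric])
  also have "\<dots> = f s (\<chi> j. - (E *v (r $ i - r $ j)))"
    by (simp add: QE_neg)
  finally show ?thesis .
qed

definition scatter_by_label :: "('n \<Rightarrow> nat) \<Rightarrow> 'a \<times> 'b \<times> real \<Rightarrow> ('a::zero \<times> 'b::zero \<times> real)^'n"
  where "scatter_by_label idx p = (\<chi> m. if real (idx m) = snd (snd p) then p else 0)"

lemma sum_scatter_by_label:
  fixes v :: "'n::finite \<Rightarrow> 'a::comm_monoid_add" and w :: "'n \<Rightarrow> 'b::comm_monoid_add"
  assumes "inj idx"
  shows "(\<Sum>j\<in>UNIV. scatter_by_label idx (v j, w j, real (idx j))) = (\<chi> j. (v j, w j, real (idx j)))"
proof -
  have "(\<Sum>j\<in>UNIV. if idx m = idx j then (v j, w j, real (idx j)) else 0) = (v m, w m, real (idx m))" for m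
    using assms by (simp add: inj_eq eq_commute[of m])
  then show ?thesis
    by (simp add: vec_eq_iff sum_component scatter_by_label_def)
qed

theorem proposition7:
  fixes f :: "real^'d^'n \<Rightarrow> real^3^'n \<Rightarrow> 'y"
    and g :: "(((real^'d) \<times> real) \<times> (real^3)) set \<Rightarrow> real^3^3"
    and idx :: "'n \<Rightarrow> nat"
  assumes N_gt_1: "CARD('n) > 1"
    and idx_bij: "bij_betw idx UNIV {1..CARD('n)}"
    and f_O3: "\<forall>(Q::real^3^3) s r. orthogonal_matrix Q \<longrightarrow> f s (\<chi> j. Q *v (r $ j)) = f s r"
    and f_trans: "\<forall>s r (t::real^3). f s (\<chi> j. r $ j + t) = f s r"
    and g_frame: "frame_fn idx g"
  shows "\<exists>(\<phi> :: (real^3) \<times> ((real^'d) \<times> real) \<Rightarrow> ((real^3) \<times> ((real^'d) \<times> real))^'n)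
           (\<rho> :: ((real^3) \<times> ((real^'d) \<times> real))^'n \<Rightarrow> ((real^3) \<times> ((real^'d) \<times> real))^'n)
           (h :: ((real^3) \<times> ((real^'d) \<times> real))^'n \<Rightarrow> 'y).
         \<forall>s r. let n1 = inv idx 1; E1 = g (local_env idx s r n1) in
           f s r = h (\<rho> (\<Sum>j\<in>UNIV. \<phi> (E1 *v rel_pos r n1 j, node_feat idx s j)))"
proof -
  define h :: "((real^3) \<times> ((real^'d) \<times> real))^'n \<Rightarrow> 'y"
    where "h z = f (\<chi> m. fst (snd (z $ m))) (\<chi> m. - fst (z $ m))" for z
  have "inj idx"
    using idx_bij by (simp add: bij_betw_def)
  have canonical: "f s r = h (id (\<Sum>j\<in>UNIV. scatter_by_label idx
      (g (local_env idx s r i) *v rel_pos r i j, node_feat idx s j)))" for s r i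
  proof -
    obtain Q where "orthogonal_matrix Q"
      and "\<And>v. v \<in> span (range (\<lambda>j. r $ i - r $ j)) \<Longrightarrow> Q *v v = g (local_env idx s r i) *v v"
      using frame_extends_to_orthogonal_matrix[OF g_frame] by blast
    then have "f s r = f s (\<chi> j. - (g (local_env idx s r i) *v (r $ i - r $ j)))"
      by (rule invariant_eq_frame_coordinates[OF f_O3 f_trans])
    then show ?thesis
      unfolding node_feat_def sum_scatter_by_label[OF \<open>inj idx\<close>] by (simp add: h_def rel_pos_def)
  qed
  show ?thesis
    by (intro exI[of _ "scatter_by_label idx"] exI[of _ id] exI[of _ h] allI) (unfold Let_def, rule canonical)
qed

end
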